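(* In every simple symmetric fractional hedonic game with $n$ agents, every sequence of IS deviations starting from the singleton partition has length $\mathcal O(n^2)$ (in particular it terminates). Moreover, there are simple symmetric fractional hedonic games with $n$ agents (for infinitely many $n$) admitting a sequence of IS deviations starting from the singleton partition of length $\Omega(n\sqrt n)$.
   Context: A fractional hedonic game (FHG) on agents $N$, $|N|=n$, is given by utility functions $v_i:N\to\mathbb R$ with $v_i(i)=0$; agent $i$'s utility for a coalition $C\ni i$ is $\frac{1}{|C|}\sum_{j\in C}v_i(j)$. It is simple if all $v_i(j)\in\{0,1\}$ and symmetric if $v_i(j)=v_j(i)$; a simple symmetric FHG is thus given by an undirected graph. The singleton partition is $\{\{i\}:i\in N\}$. An IS deviation of agent $i$ from partition $\pi$ to $\pi'$ is a move of $i$ alone from $\pi(i)$ into another coalition of $\pi$ or into a new singleton such that $i$ strictly prefers $\pi'(i)$ to $\pi(i)$ and every $j\in\pi'(i)\setminus\{i\}$ weakly prefers $\pi'(j)$ to $\pi(j)$. *)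

theory Defs
  imports Complex_Main
begin

text \<open>Agents are N = {0..<n}. A simple symmetric FHG is given by an undirected graph,
  i.e. a symmetric irreflexive relation E; v_i(j) = 1 if E i j and 0 otherwise.\<close>

definition simple_symmetric_fhg :: "(nat \<Rightarrow> nat \<Rightarrow> bool) \<Rightarrow> bool" where
  "simple_symmetric_fhg E \<longleftrightarrow> (\<forall>i j. E i j = E j i) \<and> (\<forall>i. \<not> E i i)"

definition fhg_val :: "(nat \<Rightarrow> nat \<Rightarrow> bool) \<Rightarrow> nat \<Rightarrow> nat \<Rightarrow> real" where
  "fhg_val E i j = (if E i j then 1 else 0)"

definition fhg_util :: "(nat \<Rightarrow> nat \<Rightarrow> bool) \<Rightarrow> nat \<Rightarrow> nat set \<Rightarrow> real" where
  "fhg_util E i C = (\<Sum>j\<in>C. fhg_val E i j) / real (card C)"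

definition singleton_partition :: "nat set \<Rightarrow> nat set set" where
  "singleton_partition N = {{i} | i. i \<in> N}"

definition coal :: "nat set set \<Rightarrow> nat \<Rightarrow> nat set" where
  "coal \<pi> i = (THE C. C \<in> \<pi> \<and> i \<in> C)"

text \<open>Partition obtained by moving agent i from its coalition into T
  (T a coalition of pi, or T = {} meaning a new singleton).\<close>
definition move :: "nat set set \<Rightarrow> nat \<Rightarrow> nat set \<Rightarrow> nat set set" where
  "move \<pi> i T = ((\<pi> - {coal \<pi> i, T}) \<union> {coal \<pi> i - {i}} - {{}}) \<union> {insert i T}"

definition IS_deviation ::
  "(nat \<Rightarrow> nat \<Rightarrow> bool) \<Rightarrow> nat set \<Rightarrow> nat set set \<Rightarrow> nat set set \<Rightarrow> bool" where
  "IS_deviation E N \<pi> \<pi>' \<longleftrightarrow>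
     (\<exists>i\<in>N. \<exists>T\<in>insert {} \<pi>. T \<noteq> coal \<pi> i \<and> \<pi>' = move \<pi> i T \<and>
        fhg_util E i (insert i T) > fhg_util E i (coal \<pi> i) \<and>
        (\<forall>j\<in>T. fhg_util E j (insert i T) \<ge> fhg_util E j (coal \<pi> j)))"

definition IS_sequence ::
  "(nat \<Rightarrow> nat \<Rightarrow> bool) \<Rightarrow> nat \<Rightarrow> (nat \<Rightarrow> nat set set) \<Rightarrow> nat \<Rightarrow> bool" where
  "IS_sequence E n ps k \<longleftrightarrow>
     ps 0 = singleton_partition {..<n} \<and>
     (\<forall>t<k. IS_deviation E {..<n} (ps t) (ps (Suc t)))"

end

theory Submission
  imports Defs "HOL-Library.Disjoint_Sets" "HOL-Library.Infinite_Set"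
begin

(* Upper bound: along an IS sequence the partition stays a partition into cliques, since an agent
   joining a coalition in which it has a non-neighbour makes that neighbour's utility drop (or gains
   nothing itself).  Inside a clique partition, moving from C to T is an improvement only if
   |C| <= |T|, so the potential  sum |C|^2  grows by 2(|T| - |C| + 1) >= 2 per step; it starts
   at n and never exceeds n^2.

   Lower bound: in the complete graph a move from C to T is an IS deviation whenever |C| <= |T|,
   so only the profile of coalition sizes matters.  From n = m(m+1)/2 singletons first build
   coalitions of sizes 1, 2, ..., m; then carry every agent of the smaller coalitions, one rung at
   a time, up this strictly increasing staircase to the largest coalition.  That takes
   sum_{i<m-1} (i+1)(m-1-i) = (m-1)m(m+1)/6 moves, i.e. order n^(3/2). *)

section \<open>Clique partitions and the potential\<close>

definition clique :: "(nat \<Rightarrow> nat \<Rightarrow> bool) \<Rightarrow> nat set \<Rightarrow> bool" where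
  "clique E C \<longleftrightarrow> (\<forall>x\<in>C. \<forall>y\<in>C. x \<noteq> y \<longrightarrow> E x y)"

definition clique_partition :: "(nat \<Rightarrow> nat \<Rightarrow> bool) \<Rightarrow> nat \<Rightarrow> nat set set \<Rightarrow> bool" where
  "clique_partition E n \<pi> \<longleftrightarrow> partition_on {..<n} \<pi> \<and> (\<forall>C\<in>\<pi>. clique E C)"

definition potential :: "nat set set \<Rightarrow> nat" where
  "potential \<pi> = (\<Sum>C\<in>\<pi>. card C ^ 2)"

lemma partition_on_mem_disjoint:
  "partition_on A \<pi> \<Longrightarrow> D \<in> \<pi> \<Longrightarrow> D' \<in> \<pi> \<Longrightarrow> D \<noteq> D' \<Longrightarrow> x \<in> D \<Longrightarrow> x \<notin> D'"
  unfolding partition_on_def disjoint_def by blast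

lemma coal_eq:
  assumes "partition_on A \<pi>" "C \<in> \<pi>" "i \<in> C"
  shows "coal \<pi> i = C"
  unfolding coal_def
  by (rule the_equality) (use assms partition_on_mem_disjoint[OF assms(1)] in blast)+

lemma partition_on_finite_mem:
  "finite A \<Longrightarrow> partition_on A \<pi> \<Longrightarrow> C \<in> \<pi> \<Longrightarrow> finite C"
  by (metis Sup_upper finite_subset partition_onD1)

lemma move_eq:
  assumes "partition_on A \<pi>" "C \<in> \<pi>" "i \<in> C"
  shows "move \<pi> i T = insert (insert i T) ((\<pi> - {C, T}) \<union> ({C - {i}} - {{}}))"
  using coal_eq[OF assms] partition_onD3[OF assms(1)] unfolding move_def by auto

lemma partition_on_move:
  assumes \<pi>: "partition_on A \<pi>" and C: "C \<in> \<pi>" "i \<in> C" and T: "T \<in> \<pi>" "T \<noteq> C"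
  shows "partition_on A (move \<pi> i T)"
proof (rule partition_onI)
  show "\<Union>(move \<pi> i T) = A"
    using partition_onD1[OF \<pi>] C T unfolding move_eq[OF \<pi> C] by blast
  show "{} \<notin> move \<pi> i T"
    using partition_onD3[OF \<pi>] unfolding move_eq[OF \<pi> C] by blast
  show "disjnt D D'" if "D \<in> move \<pi> i T" "D' \<in> move \<pi> i T" "D \<noteq> D'" for D D'
    using that partition_on_mem_disjoint[OF \<pi>] C T unfolding move_eq[OF \<pi> C] disjnt_iff
    by blast
qed

lemma potential_move:
  assumes A: "finite A" and \<pi>: "partition_on A \<pi>"
    and C: "C \<in> \<pi>" "i \<in> C" and T: "T \<in> \<pi>" "T \<noteq> C"
  shows "potential (move \<pi> i T) + 2 * card C = potential \<pi> + 2 * card T + 2"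
proof -
  define R where "R = \<pi> - {C, T}"
  note disj = partition_on_mem_disjoint[OF \<pi>]
  have ne: "{} \<notin> \<pi>" using partition_onD3[OF \<pi>] .
  have fin: "finite R" "finite C" "finite T"
    using finite_elements[OF A \<pi>] partition_on_finite_mem[OF A \<pi>] C T by (auto simp: R_def)
  have iT: "i \<notin> T" and iT_R: "insert i T \<notin> R" and C'_R: "C - {i} \<noteq> {} \<Longrightarrow> C - {i} \<notin> R"
    using disj C T ne unfolding R_def by blast+
  have \<pi>_eq: "\<pi> = insert C (insert T R)" and "C \<notin> R" "T \<notin> R"
    using C T unfolding R_def by auto
  then have pot: "potential \<pi> = potential R + card C ^ 2 + card T ^ 2"
    using fin T(2) unfolding potential_def by (subst \<pi>_eq) simp
  have cT: "card (insert i T) = card T + 1" using fin iT by simp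
  have mv: "move \<pi> i T = insert (insert i T) (R \<union> ({C - {i}} - {{}}))"
    unfolding move_eq[OF \<pi> C] R_def ..
  obtain c where c: "card C = Suc c" "card (C - {i}) = c"
    using fin(2) C(2) by (metis card_Suc_Diff1)
  show ?thesis
  proof (cases "C - {i} = {}")
    case True
    then have "move \<pi> i T = insert (insert i T) R" unfolding mv by simp
    then show ?thesis using pot fin iT_R cT c True by (simp add: potential_def power2_eq_square)
  next
    case False
    then have "move \<pi> i T = insert (insert i T) (insert (C - {i}) R)" unfolding mv by simp
    moreover have "insert i T \<noteq> C - {i}" by blast
    ultimately show ?thesis
      using pot fin iT_R C'_R[OF False] cT c by (simp add: potential_def power2_eq_square)
  qed
qed

lemma potential_le_card_sq:
  assumes A: "finite A" and \<pi>: "partition_on A \<pi>"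
  shows "potential \<pi> \<le> card A ^ 2"
proof -
  have "potential \<pi> \<le> (\<Sum>C\<in>\<pi>. card C * card A)"
    unfolding potential_def power2_eq_square
    using A \<pi> by (intro sum_mono mult_left_mono card_mono) (auto dest: partition_onD1)
  also have "\<dots> = (\<Sum>C\<in>\<pi>. card C) * card A" by (simp add: sum_distrib_right)
  also have "(\<Sum>C\<in>\<pi>. card C) = card A"
    using sum.partition[OF A \<pi>, of "\<lambda>_. 1::nat"] by (simp flip: card_eq_sum)
  finally show ?thesis by (simp add: power2_eq_square)
qed

lemma potential_singletons: "potential ((\<lambda>x. {x}) ` A) = card A"
  unfolding potential_def by (subst sum.reindex) (auto simp: inj_on_def)

lemma fhg_util_eq:
  "finite C \<Longrightarrow> fhg_util E i C = real (card {j\<in>C. E i j}) / real (card C)"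
  unfolding fhg_util_def fhg_val_def by (simp add: sum.If_cases Int_def conj_commute)

lemma fhg_util_nonneg: "fhg_util E i C \<ge> 0"
  unfolding fhg_util_def fhg_val_def by (simp add: sum_nonneg)

lemma fhg_util_clique:
  assumes E: "simple_symmetric_fhg E" and "finite C" "i \<in> C" "clique E C"
  shows "fhg_util E i C = (real (card C) - 1) / real (card C)"
proof -
  have "{j\<in>C. E i j} = C - {i}"
    using assms unfolding simple_symmetric_fhg_def clique_def by auto
  moreover have "card C > 0" using assms card_gt_0_iff by blast
  ultimately show ?thesis using assms by (simp add: fhg_util_eq of_nat_diff)
qed

lemma clique_insert:
  "simple_symmetric_fhg E \<Longrightarrow> clique E T \<Longrightarrow> \<forall>j\<in>T. E i j \<Longrightarrow> clique E (insert i T)"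
  unfolding clique_def simple_symmetric_fhg_def by blast

lemma accepted_joiner_adjacent:
  assumes E: "simple_symmetric_fhg E" and T: "finite T" "clique E T" "i \<notin> T"
    and gain: "fhg_util E i (insert i T) > 0"
    and accepted: "\<forall>j\<in>T. fhg_util E j T \<le> fhg_util E j (insert i T)"
  shows "\<forall>j\<in>T. E i j"
proof (rule ccontr)
  assume "\<not> (\<forall>j\<in>T. E i j)"
  then obtain j where j: "j \<in> T" "\<not> E i j" by blast
  have sym: "E x y = E y x" and irr: "\<not> E x x" for x y
    using E unfolding simple_symmetric_fhg_def by auto
  define t where "t = real (card T)"
  have card_T: "card T \<ge> 1" using T(1) j(1) by (auto simp: Suc_le_eq card_gt_0_iff)
  then have t: "t \<ge> 1" unfolding t_def by simp
  have "{y\<in>insert i T. E j y} = T - {j}"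
    using j T(2,3) sym irr unfolding clique_def by auto
  then have "fhg_util E j (insert i T) = (t - 1) / (t + 1)"
    using T j(1) card_T by (simp add: fhg_util_eq of_nat_diff t_def)
  moreover have "fhg_util E j T = (t - 1) / t"
    unfolding t_def by (rule fhg_util_clique[OF E T(1) j(1) T(2)])
  ultimately have "(t - 1) / t \<le> (t - 1) / (t + 1)" using accepted j(1) by metis
  then have "t \<le> 1" using t by (simp add: field_simps)
  then have "card T = 1" using t unfolding t_def by linarith
  then have "T = {j}" using j(1) by (metis card_1_singletonE singletonD)
  then have "{y\<in>insert i T. E i y} = {}" using j(2) irr by auto
  then show False using gain T(1) by (simp only: fhg_util_eq finite_insert) simp
qed

lemma IS_deviation_clique_partitionE:
  assumes E: "simple_symmetric_fhg E" and \<pi>: "clique_partition E n \<pi>"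
    and dev: "IS_deviation E {..<n} \<pi> \<pi>'"
  obtains i C T where "C \<in> \<pi>" "i \<in> C" "T \<in> \<pi>" "T \<noteq> C" "\<forall>j\<in>T. E i j"
    "card C \<le> card T" "\<pi>' = move \<pi> i T"
proof -
  have part: "partition_on {..<n} \<pi>" and cliques: "\<And>C. C \<in> \<pi> \<Longrightarrow> clique E C"
    using \<pi> unfolding clique_partition_def by auto
  have fin: "\<And>C. C \<in> \<pi> \<Longrightarrow> finite C" using partition_on_finite_mem[OF _ part] by simp
  obtain i T where i: "i < n" and T: "T \<in> insert {} \<pi>" "T \<noteq> coal \<pi> i" and \<pi>': "\<pi>' = move \<pi> i T"
    and gain: "fhg_util E i (insert i T) > fhg_util E i (coal \<pi> i)"
    and accepted: "\<forall>j\<in>T. fhg_util E j (insert i T) \<ge> fhg_util E j (coal \<pi> j)"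
    using dev unfolding IS_deviation_def by auto
  obtain C where C: "C \<in> \<pi>" "i \<in> C" using i partition_onD1[OF part] by auto
  have coal_C: "coal \<pi> i = C" using coal_eq[OF part C] .
  have gain_pos: "fhg_util E i (insert i T) > 0"
    using gain fhg_util_nonneg[of E i "coal \<pi> i"] by linarith
  have "T \<noteq> {}"
  proof
    assume "T = {}"
    then show False
      using gain_pos E by (simp add: fhg_util_def fhg_val_def simple_symmetric_fhg_def)
  qed
  then have T_in: "T \<in> \<pi>" using T(1) by simp
  have iT: "i \<notin> T" using coal_eq[OF part T_in] T(2) by blast
  have adj: "\<forall>j\<in>T. E i j"
    using accepted coal_eq[OF part T_in]
    by (intro accepted_joiner_adjacent[OF E fin[OF T_in] cliques[OF T_in] iT gain_pos]) simp
  have "fhg_util E i (insert i T) = real (card T) / (real (card T) + 1)"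
    using fhg_util_clique[OF E _ insertI1 clique_insert[OF E cliques[OF T_in] adj]] fin[OF T_in] iT
    by simp
  moreover have "fhg_util E i C = (real (card C) - 1) / real (card C)"
    using fhg_util_clique[OF E fin[OF C(1)] C(2) cliques[OF C(1)]] .
  ultimately have "(real (card C) - 1) / real (card C) < real (card T) / (real (card T) + 1)"
    using gain coal_C by simp
  moreover have "card C > 0" using C fin[OF C(1)] card_gt_0_iff by blast
  ultimately have "card C \<le> card T" by (simp add: field_simps)
  then show thesis using that C T_in T(2) coal_C adj \<pi>' by simp
qed

lemma IS_deviation_increases_potential:
  assumes E: "simple_symmetric_fhg E" and \<pi>: "clique_partition E n \<pi>"
    and dev: "IS_deviation E {..<n} \<pi> \<pi>'"
  shows "clique_partition E n \<pi>' \<and> potential \<pi> + 2 \<le> potential \<pi>'"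
proof -
  have part: "partition_on {..<n} \<pi>" and cliques: "\<And>C. C \<in> \<pi> \<Longrightarrow> clique E C"
    using \<pi> unfolding clique_partition_def by auto
  obtain i C T where C: "C \<in> \<pi>" "i \<in> C" and T: "T \<in> \<pi>" "T \<noteq> C" and adj: "\<forall>j\<in>T. E i j"
    and le: "card C \<le> card T" and \<pi>': "\<pi>' = move \<pi> i T"
    using IS_deviation_clique_partitionE[OF E \<pi> dev] .
  have "clique E (insert i T)" using clique_insert[OF E cliques[OF T(1)] adj] .
  moreover have "clique E (C - {i})" using cliques[OF C(1)] unfolding clique_def by blast
  ultimately have "\<forall>D\<in>move \<pi> i T. clique E D"
    using cliques unfolding move_eq[OF part C] by blast
  then have "clique_partition E n \<pi>'"
    unfolding clique_partition_def \<pi>' using partition_on_move[OF part C T] by blast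
  moreover have "potential \<pi> + 2 \<le> potential \<pi>'"
    using potential_move[OF _ part C T] le unfolding \<pi>' by simp
  ultimately show ?thesis ..
qed

lemma IS_sequence_length_bound:
  assumes E: "simple_symmetric_fhg E" and seq: "IS_sequence E n ps k"
  shows "n + 2 * k \<le> n ^ 2"
proof -
  have "clique_partition E n (ps t) \<and> n + 2 * t \<le> potential (ps t)" if "t \<le> k" for t
    using that
  proof (induction t)
    case 0
    have "ps 0 = (\<lambda>i. {i}) ` {..<n}"
      using seq unfolding IS_sequence_def singleton_partition_def by auto
    then show ?case
      using partition_on_singletons potential_singletons
      by (simp add: clique_partition_def clique_def)
  next
    case (Suc t)
    then have "IS_deviation E {..<n} (ps t) (ps (Suc t))"
      using seq unfolding IS_sequence_def by simp
    then show ?case using Suc IS_deviation_increases_potential[OF E] by fastforce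
  qed
  then show ?thesis
    using potential_le_card_sq[of "{..<n}"] unfolding clique_partition_def
    by (metis card_lessThan finite_lessThan order_refl order_trans)
qed

section \<open>IS deviations in the complete graph\<close>

definition complete_graph :: "nat \<Rightarrow> nat \<Rightarrow> bool" where
  "complete_graph i j \<longleftrightarrow> i \<noteq> j"

lemma simple_symmetric_complete_graph: "simple_symmetric_fhg complete_graph"
  unfolding simple_symmetric_fhg_def complete_graph_def by auto

lemma clique_complete_graph: "clique complete_graph C"
  unfolding clique_def complete_graph_def by simp

lemma IS_deviation_complete_graph:
  assumes N: "finite N" and \<pi>: "partition_on N \<pi>" and A: "A \<in> \<pi>" "x \<in> A"
    and B: "B \<in> \<pi>" "B \<noteq> A" and le: "card A \<le> card B"
  shows "IS_deviation complete_graph N \<pi> (move \<pi> x B)"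
proof -
  have fin: "finite A" "finite B" using partition_on_finite_mem[OF N \<pi>] A B by auto
  have xB: "x \<notin> B" using coal_eq[OF \<pi> A] coal_eq[OF \<pi> B(1)] B(2) by auto
  have util: "fhg_util complete_graph j C = (real (card C) - 1) / real (card C)"
    if "finite C" "j \<in> C" for j C
    using fhg_util_clique[OF simple_symmetric_complete_graph that clique_complete_graph] .
  have util_B: "fhg_util complete_graph j (insert x B) = real (card B) / (real (card B) + 1)"
    if "j \<in> insert x B" for j
    using util[OF _ that] fin xB by simp
  have "card A > 0" using fin A(2) card_gt_0_iff by blast
  then have "(real (card A) - 1) / real (card A) < real (card B) / (real (card B) + 1)"
    using le by (simp add: field_simps)
  then have gain: "fhg_util complete_graph x (coal \<pi> x) < fhg_util complete_graph x (insert x B)"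
    using util[OF fin(1) A(2)] util_B coal_eq[OF \<pi> A] by simp
  have "(real (card B) - 1) / real (card B) \<le> real (card B) / (real (card B) + 1)"
    by (simp add: divide_simps algebra_simps)
  then have "\<forall>j\<in>B. fhg_util complete_graph j (coal \<pi> j) \<le> fhg_util complete_graph j (insert x B)"
    using util[OF fin(2)] util_B coal_eq[OF \<pi> B(1)] by simp
  moreover have "x \<in> N" using partition_onD1[OF \<pi>] A by blast
  ultimately show ?thesis
    unfolding IS_deviation_def using B coal_eq[OF \<pi> A] gain by blast
qed

definition label_class :: "nat set \<Rightarrow> (nat \<Rightarrow> nat) \<Rightarrow> nat \<Rightarrow> nat set" where
  "label_class N f l = {i \<in> N. f i = l}"

definition labelled_partition :: "nat set \<Rightarrow> (nat \<Rightarrow> nat) \<Rightarrow> nat set set" where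
  "labelled_partition N f = {label_class N f l | l. label_class N f l \<noteq> {}}"

definition class_sizes :: "nat set \<Rightarrow> (nat \<Rightarrow> nat) \<Rightarrow> nat \<Rightarrow> nat" where
  "class_sizes N f l = card (label_class N f l)"

lemma partition_on_labelled_partition: "partition_on N (labelled_partition N f)"
  by (rule partition_onI) (auto simp: labelled_partition_def label_class_def disjnt_def)

lemma label_class_update:
  assumes "x \<in> N" "f x \<noteq> b"
  shows "label_class N (f(x := b)) l =
    (if l = f x then label_class N f l - {x}
     else if l = b then insert x (label_class N f l) else label_class N f l)"
  using assms unfolding label_class_def by auto

lemma label_class_inj: "label_class N f l = label_class N f l' \<Longrightarrow> label_class N f l \<noteq> {} \<Longrightarrow> l = l'"
  unfolding label_class_def by auto

lemma labelled_partition_split: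
  assumes "label_class N f b \<noteq> {}"
  shows "labelled_partition N f = insert (label_class N f b)
    ({label_class N f l | l. l \<noteq> a \<and> l \<noteq> b \<and> label_class N f l \<noteq> {}}
     \<union> ({label_class N f a} - {{}}))"
  using assms unfolding labelled_partition_def by auto

lemma move_labelled_partition:
  assumes x: "x \<in> N" "f x \<noteq> b" and B: "label_class N f b \<noteq> {}"
  shows "move (labelled_partition N f) x (label_class N f b) = labelled_partition N (f(x := b))"
proof -
  let ?A = "label_class N f (f x)" and ?B = "label_class N f b"
  have A: "?A \<in> labelled_partition N f" "x \<in> ?A"
    using x unfolding labelled_partition_def label_class_def by auto
  have "labelled_partition N f - {?A, ?B} =
      {label_class N f l | l. l \<noteq> f x \<and> l \<noteq> b \<and> label_class N f l \<noteq> {}}"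
    using label_class_inj[of N f] unfolding labelled_partition_def by blast
  moreover have "labelled_partition N (f(x := b)) = insert (insert x ?B)
      ({label_class N f l | l. l \<noteq> f x \<and> l \<noteq> b \<and> label_class N f l \<noteq> {}} \<union> ({?A - {x}} - {{}}))"
    using labelled_partition_split[of N "f(x := b)" b "f x"]
      label_class_update[of x N f b, OF x] x(2)
    by auto
  ultimately show ?thesis
    unfolding move_eq[OF partition_on_labelled_partition A] by simp
qed

lemma class_sizes_update:
  assumes N: "finite N" and x: "x \<in> N" "f x \<noteq> b"
  shows "class_sizes N (f(x := b)) =
    (class_sizes N f)(f x := class_sizes N f (f x) - 1, b := class_sizes N f b + 1)"
proof -
  have "x \<in> label_class N f (f x)" "x \<notin> label_class N f b" "finite (label_class N f l)" for l
    using N x unfolding label_class_def by auto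
  then show ?thesis
    using x(2) unfolding class_sizes_def label_class_update[of x N f b, OF x]
    by (auto simp: fun_eq_iff)
qed

definition size_transfer :: "(nat \<Rightarrow> nat) \<Rightarrow> (nat \<Rightarrow> nat) \<Rightarrow> bool" where
  "size_transfer s s' \<longleftrightarrow> (\<exists>a b. a \<noteq> b \<and> 0 < s a \<and> s a \<le> s b \<and> s' = s(a := s a - 1, b := s b + 1))"

lemma size_transferI:
  "a \<noteq> b \<Longrightarrow> 0 < s a \<Longrightarrow> s a \<le> s b \<Longrightarrow> size_transfer s (s(a := s a - 1, b := s b + 1))"
  unfolding size_transfer_def by blast

lemma size_transfer_realizable:
  assumes N: "finite N" and "size_transfer (class_sizes N f) s"
  obtains x b where "x \<in> N" "f x \<noteq> b" "s = class_sizes N (f(x := b))"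
    "IS_deviation complete_graph N (labelled_partition N f) (labelled_partition N (f(x := b)))"
proof -
  obtain a b where ab: "a \<noteq> b" "0 < class_sizes N f a" "class_sizes N f a \<le> class_sizes N f b"
    and s: "s = (class_sizes N f)(a := class_sizes N f a - 1, b := class_sizes N f b + 1)"
    using assms(2) unfolding size_transfer_def by blast
  have ne: "label_class N f a \<noteq> {}" "label_class N f b \<noteq> {}"
    using ab(2,3) unfolding class_sizes_def by auto
  then obtain x where x: "x \<in> N" "f x = a" unfolding label_class_def by auto
  have "label_class N f a \<in> labelled_partition N f" "label_class N f b \<in> labelled_partition N f"
    using ne unfolding labelled_partition_def by auto
  moreover have "x \<in> label_class N f a" using x unfolding label_class_def by simp
  moreover have "label_class N f b \<noteq> label_class N f a" using label_class_inj ne ab(1) by metis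
  ultimately have "IS_deviation complete_graph N (labelled_partition N f)
      (move (labelled_partition N f) x (label_class N f b))"
    using IS_deviation_complete_graph[OF N partition_on_labelled_partition] ab(3)
    unfolding class_sizes_def by blast
  then show thesis
    using that[of x b] x ab(1) s class_sizes_update[OF N x(1)]
      move_labelled_partition[OF x(1) _ ne(2)]
    by simp
qed

lemma size_transfers_realizable:
  assumes N: "finite N" and "(size_transfer ^^ k) (class_sizes N f) s"
  shows "\<exists>g. class_sizes N g = s \<and>
    (IS_deviation complete_graph N ^^ k) (labelled_partition N f) (labelled_partition N g)"
  using assms(2)
proof (induction k arbitrary: s)
  case 0
  then show ?case by auto
next
  case (Suc k)
  then obtain s0 where "(size_transfer ^^ k) (class_sizes N f) s0" "size_transfer s0 s"
    by (auto elim: relpowp_Suc_E)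
  moreover from this(1) obtain g where "class_sizes N g = s0"
    "(IS_deviation complete_graph N ^^ k) (labelled_partition N f) (labelled_partition N g)"
    using Suc.IH by blast
  ultimately show ?case
    by (metis size_transfer_realizable[OF N] relpowp_Suc_I)
qed

section \<open>A long sequence of size transfers\<close>

lemma size_transfers_absorb:
  assumes "finite D" "l \<notin> D" "\<forall>y\<in>D. s y = 1" "0 < s l"
  shows "(size_transfer ^^ card D) s (\<lambda>x. if x \<in> D then 0 else if x = l then s l + card D else s x)"
  using assms
proof (induction D rule: finite_induct)
  case empty
  then show ?case by (simp add: fun_eq_iff)
next
  case (insert y D)
  let ?s = "\<lambda>x. if x \<in> D then 0 else if x = l then s l + card D else s x"
  have "size_transfer ?s (?s(y := ?s y - 1, l := ?s l + 1))"
    using insert by (intro size_transferI) auto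
  moreover have "?s(y := ?s y - 1, l := ?s l + 1) =
      (\<lambda>x. if x \<in> insert y D then 0 else if x = l then s l + card (insert y D) else s x)"
    using insert by (auto simp: fun_eq_iff)
  ultimately show ?case using insert by (auto intro: relpowp_Suc_I)
qed

definition triangle :: "nat \<Rightarrow> nat" where
  "triangle j = (\<Sum>i<j. i)"

(* Size profile after stage j of building the staircase: labels i < j already hold i + 1 agents,
   labels j..m-1 are still singletons, and the pool of singletons at labels m..m + triangle m - 1
   has been used up to m + triangle j. *)
definition staircase_stage :: "nat \<Rightarrow> nat \<Rightarrow> nat \<Rightarrow> nat" where
  "staircase_stage m j x =
    (if x < j then x + 1 else if x < m then 1
     else if x < m + triangle j then 0 else if x < m + triangle m then 1 else 0)"

lemma size_transfers_staircase:
  "j \<le> m \<Longrightarrow> \<exists>k. (size_transfer ^^ k) (staircase_stage m 0) (staircase_stage m j)"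
proof (induction j)
  case 0
  show ?case by (auto intro: relpowp_0_I)
next
  case (Suc j)
  then obtain k where k: "(size_transfer ^^ k) (staircase_stage m 0) (staircase_stage m j)" by auto
  define D where "D = {m + triangle j ..< m + triangle j + j}"
  have le: "triangle j + j \<le> triangle m"
    using Suc.prems sum_mono2[of "{..<m}" "{..<Suc j}" id] by (simp add: triangle_def)
  have "(size_transfer ^^ card D) (staircase_stage m j)
      (\<lambda>x. if x \<in> D then 0 else if x = j then staircase_stage m j j + card D
        else staircase_stage m j x)"
    using Suc.prems le by (intro size_transfers_absorb) (auto simp: D_def staircase_stage_def)
  moreover have "(\<lambda>x. if x \<in> D then 0 else if x = j then staircase_stage m j j + card D
      else staircase_stage m j x) = staircase_stage m (Suc j)"
    using Suc.prems le by (auto simp: fun_eq_iff D_def staircase_stage_def triangle_def)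
  ultimately show ?case using k relpowp_trans by metis
qed

lemma strict_mono_on_shift_ends:
  fixes s :: "nat \<Rightarrow> nat"
  assumes "a < b" "strict_mono_on {a..b} s"
  shows "strict_mono_on {a..b} (s(a := s a - t, b := s b + t))"
proof (rule strict_mono_onI)
  fix i j :: nat assume ij: "i \<in> {a..b}" "j \<in> {a..b}" "i < j"
  have "s i < s j" using strict_mono_onD[OF assms(2) ij] .
  then show "(s(a := s a - t, b := s b + t)) i < (s(a := s a - t, b := s b + t)) j"
    using ij assms(1) by auto
qed

(* The agent handed on travels top-down: first b - 1 gives one to b, then b - 2 to b - 1, ..., so
   each recipient, having just given one agent away, is still at least as large as its donor. *)
lemma size_transfers_along_chain:
  assumes "a < b" "strict_mono_on {a..b} s" "0 < s a"
  shows "(size_transfer ^^ (b - a)) s (s(a := s a - 1, b := s b + 1))"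
  using assms
proof (induction "b - a" arbitrary: a)
  case 0
  then show ?case by simp
next
  case (Suc d)
  have step: "s a < s (Suc a)" if "Suc a \<le> b"
    using strict_mono_onD[OF Suc.prems(2)] that Suc.prems(1) by simp
  show ?case
  proof (cases "Suc a = b")
    case True
    have "size_transfer s (s(a := s a - 1, b := s b + 1))"
      using size_transferI[of a b s] step Suc.prems True by simp
    moreover have "b - a = 1" using True by simp
    ultimately show ?thesis by (metis relpowp_1)
  next
    case False
    let ?s = "s(Suc a := s (Suc a) - 1, b := s b + 1)"
    have "(size_transfer ^^ (b - Suc a)) s ?s"
      using Suc False step by (intro Suc.hyps) (auto elim: monotone_on_subset)
    moreover have "size_transfer ?s (?s(a := ?s a - 1, Suc a := ?s (Suc a) + 1))"
      using False step Suc.prems by (intro size_transferI) auto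
    moreover have "?s(a := ?s a - 1, Suc a := ?s (Suc a) + 1) = s(a := s a - 1, b := s b + 1)"
      using False step Suc.prems by (auto simp: fun_eq_iff)
    ultimately show ?thesis
      using Suc.hyps(2) by (metis relpowp_Suc_I Suc_diff_Suc Suc.prems(1))
  qed
qed

lemma size_transfers_waves:
  assumes "a < b" "strict_mono_on {a..b} s" "t \<le> s a"
  shows "(size_transfer ^^ (t * (b - a))) s (s(a := s a - t, b := s b + t))"
  using assms(3)
proof (induction t)
  case 0
  then show ?case by (simp add: fun_eq_iff)
next
  case (Suc t)
  let ?s = "s(a := s a - t, b := s b + t)"
  have "(size_transfer ^^ (b - a)) ?s (?s(a := ?s a - 1, b := ?s b + 1))"
    using Suc.prems assms(1) strict_mono_on_shift_ends[OF assms(1,2)]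
    by (intro size_transfers_along_chain) auto
  moreover have "?s(a := ?s a - 1, b := ?s b + 1) = s(a := s a - Suc t, b := s b + Suc t)"
    using assms(1) by (auto simp: fun_eq_iff)
  ultimately show ?case
    using Suc relpowp_trans by (metis Suc_leD add.commute mult_Suc)
qed

lemma size_transfers_drain:
  assumes "a \<le> b" "strict_mono_on {a..b} s"
  shows "\<exists>s'. (size_transfer ^^ (\<Sum>i\<in>{a..<b}. s i * (b - i))) s s'"
  using assms
proof (induction "b - a" arbitrary: a s)
  case 0
  then show ?case by (auto intro: relpowp_0_I)
next
  case (Suc d)
  then have ab: "a < b" by simp
  let ?s = "s(a := s a - s a, b := s b + s a)"
  have "(size_transfer ^^ (s a * (b - a))) s ?s"
    using size_transfers_waves[OF ab Suc.prems(2) order_refl] by simp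
  moreover have "strict_mono_on {Suc a..b} ?s"
    using monotone_on_subset[OF strict_mono_on_shift_ends[OF ab Suc.prems(2), where t = "s a"],
      of "{Suc a..b}"]
    by auto
  then obtain s' where "(size_transfer ^^ (\<Sum>i\<in>{Suc a..<b}. ?s i * (b - i))) ?s s'"
    using Suc.hyps ab by (metis Suc_diff_Suc Suc_leI nat.inject)
  moreover have "(\<Sum>i\<in>{Suc a..<b}. ?s i * (b - i)) = (\<Sum>i\<in>{Suc a..<b}. s i * (b - i))"
    by (rule sum.cong) auto
  moreover have "(\<Sum>i\<in>{a..<b}. s i * (b - i)) = s a * (b - a) + (\<Sum>i\<in>{Suc a..<b}. s i * (b - i))"
    using ab by (simp add: sum.atLeast_Suc_lessThan)
  ultimately show ?case using relpowp_trans by metis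
qed

lemma six_times_sum_staircase: "6 * (\<Sum>i<p. (i + 1) * (p - i)) = p * (p + 1) * (p + 2::nat)"
proof (induction p)
  case (Suc p)
  have "(\<Sum>i<Suc p. (i + 1) * (Suc p - i)) = (\<Sum>i<Suc p. (i + 1) * (p - i) + (i + 1))"
    by (rule sum.cong) (auto simp: Suc_diff_le)
  also have "\<dots> = (\<Sum>i<p. (i + 1) * (p - i)) + (\<Sum>i<Suc p. i + 1)"
    unfolding sum.distrib sum.lessThan_Suc[of "\<lambda>i. (i + 1) * (p - i)"] by simp
  moreover have "2 * (\<Sum>i<Suc p. i + 1) = (p + 1) * (p + 2)"
    by (induction p) auto
  ultimately show ?case using Suc.IH by (simp add: algebra_simps)
qed simp

lemma double_triangle: "2 * triangle m + m = m * m"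
  by (induction m) (auto simp: triangle_def algebra_simps)

lemma labelled_partition_id: "labelled_partition N id = singleton_partition N"
  unfolding labelled_partition_def singleton_partition_def label_class_def by auto

lemma long_IS_sequence_complete_graph:
  assumes m: "2 \<le> m"
  shows "\<exists>ps k. IS_sequence complete_graph (m + triangle m) ps k \<and> (m - 1) * m * (m + 1) \<le> 6 * k"
proof -
  define N where "N = {..<m + triangle m}"
  define k2 where "k2 = (\<Sum>i<m - 1. (i + 1) * (m - 1 - i))"
  have "label_class N id l = (if l < m + triangle m then {l} else {})" for l
    unfolding label_class_def N_def by auto
  then have "class_sizes N id = staircase_stage m 0"
    by (auto simp: fun_eq_iff class_sizes_def staircase_stage_def triangle_def)
  moreover obtain k1 where "(size_transfer ^^ k1) (staircase_stage m 0) (staircase_stage m m)"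
    using size_transfers_staircase[of m m] by auto
  moreover obtain s where "(size_transfer ^^ k2) (staircase_stage m m) s"
  proof -
    have stair: "staircase_stage m m i = i + 1" if "i < m" for i
      using that by (simp add: staircase_stage_def)
    then have "strict_mono_on {0..m - 1} (staircase_stage m m)"
      using m by (intro strict_mono_onI) auto
    moreover have "(\<Sum>i\<in>{0..<m - 1}. staircase_stage m m i * (m - 1 - i)) = k2"
      using stair unfolding k2_def by (auto simp: atLeast0LessThan intro!: sum.cong)
    ultimately show thesis using that size_transfers_drain[of 0 "m - 1"] by auto
  qed
  ultimately have "(size_transfer ^^ (k1 + k2)) (class_sizes N id) s"
    using relpowp_trans by metis
  then obtain g where "(IS_deviation complete_graph N ^^ (k1 + k2)) (singleton_partition N)
      (labelled_partition N g)"
    using size_transfers_realizable[of N] labelled_partition_id unfolding N_def by fastforce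
  then obtain ps where "IS_sequence complete_graph (m + triangle m) ps (k1 + k2)"
    unfolding relpowp_fun_conv IS_sequence_def N_def by blast
  moreover have "6 * k2 = (m - 1) * m * (m + 1)"
    using six_times_sum_staircase[of "m - 1"] m unfolding k2_def by simp
  ultimately show ?thesis by (metis le_add2 mult_le_mono2)
qed

lemma power_three_halves_le_cubic:
  fixes M N :: real
  assumes M: "2 \<le> M" and N: "2 * N = M * M + M"
  shows "N * sqrt N \<le> 2 * ((M - 1) * M * (M + 1))"
proof -
  have MM: "2 * M \<le> M * M" using M by (simp add: mult_right_mono)
  then have N_le: "N \<le> M * M" and "0 \<le> N" using M N by linarith+
  have "sqrt N \<le> M" using M real_sqrt_le_mono[OF N_le] by simp
  then have "N * sqrt N \<le> M * M * M"
    using mult_mono[OF N_le] \<open>0 \<le> N\<close> by simp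
  moreover have "2 * M \<le> M * M * M"
    using mult_right_mono[of 2 "M * M" M] MM M by linarith
  ultimately show ?thesis by (simp add: algebra_simps)
qed

lemma infinitely_many_long_IS_sequences:
  "infinite {n. \<exists>E ps k. simple_symmetric_fhg E \<and> IS_sequence E n ps k
                    \<and> real k \<ge> 1 / 12 * real n * sqrt (real n)}"
  unfolding infinite_nat_iff_unbounded_le
proof
  fix m0 :: nat
  define m where "m = m0 + 2"
  have m: "2 \<le> m" unfolding m_def by simp
  obtain ps k where seq: "IS_sequence complete_graph (m + triangle m) ps k"
    and k: "(m - 1) * m * (m + 1) \<le> 6 * k"
    using long_IS_sequence_complete_graph[OF m] by auto
  have "2 * (m + triangle m) = m * m + m" using double_triangle[of m] by simp
  then have "2 * real (m + triangle m) = real m * real m + real m"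
    by (metis of_nat_add of_nat_mult of_nat_numeral)
  then have "real (m + triangle m) * sqrt (real (m + triangle m))
      \<le> 2 * ((real m - 1) * real m * (real m + 1))"
    using m by (intro power_three_halves_le_cubic) auto
  also have "(real m - 1) * real m * (real m + 1) = real ((m - 1) * m * (m + 1))"
    using m by (simp add: of_nat_diff algebra_simps)
  also have "\<dots> \<le> 6 * real k" using k by linarith
  finally have "1 / 12 * real (m + triangle m) * sqrt (real (m + triangle m)) \<le> real k" by simp
  moreover have "m0 \<le> m + triangle m" unfolding m_def by simp
  ultimately show "\<exists>n\<ge>m0. n \<in> {n. \<exists>E ps k. simple_symmetric_fhg E \<and> IS_sequence E n ps k
                    \<and> real k \<ge> 1 / 12 * real n * sqrt (real n)}"
    using seq simple_symmetric_complete_graph by blast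
qed

theorem proposition5p4:
  shows "(\<exists>c::real. \<forall>n E ps k. simple_symmetric_fhg E \<longrightarrow> IS_sequence E n ps k
            \<longrightarrow> real k \<le> c * real n ^ 2)
       \<and> (\<exists>d::real. d > 0 \<and>
            infinite {n. \<exists>E ps k. simple_symmetric_fhg E \<and> IS_sequence E n ps k
                              \<and> real k \<ge> d * real n * sqrt (real n)})"
proof (intro conjI exI)
  show "\<forall>n E ps k. simple_symmetric_fhg E \<longrightarrow> IS_sequence E n ps k \<longrightarrow> real k \<le> 1 * real n ^ 2"
  proof (intro allI impI)
    fix n E ps k assume "simple_symmetric_fhg E" "IS_sequence E n ps k"
    then have "k \<le> n ^ 2" using IS_sequence_length_bound by fastforce
    then show "real k \<le> 1 * real n ^ 2" by (simp flip: of_nat_power)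
  qed
  show "(1 / 12 :: real) > 0" by simp
qed (rule infinitely_many_long_IS_sequences)

end
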